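(* Let $A,B\subseteq\Gamma$ be finite nonempty sets. Then there are $s\ge2^{-4}|A||B|^2\mathsf{E}(A,B)^{-1}$ pairwise disjoint sets $A_j\subseteq A+b_j$ with $|A_j|\ge|A|/2$ and $b_j\in B$, $j\in[s]$. Moreover, for any set $S\subseteq A+B$ put $\sigma=\sum_{x\in S}(A*B)(x)$ and suppose $\sigma\ge16|B|$. Then there are $s\ge2^{-8}\sigma^3|A|^{-2}|B|^{-1}\mathsf{E}(A,B)^{-1}$ pairwise disjoint sets $S_j\subseteq S\cap(A+b_j)$ with $|S_j|\ge2^{-3}\sigma|B|^{-1}$ and $b_j\in B$, $j\in[s]$.
   Context: $\Gamma$ is an abelian group. $(A*B)(x)=|\{(a,b)\in A\times B:a+b=x\}|$. $\mathsf{E}(A,B)=|\{(a_1,a_2,b_1,b_2)\in A^2\times B^2:a_1+b_1=a_2+b_2\}|$. *)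

theory Defs
  imports Complex_Main
begin

definition conv :: "'a::ab_group_add set \<Rightarrow> 'a set \<Rightarrow> 'a \<Rightarrow> nat" where
  "conv A B x = card {(a, b). a \<in> A \<and> b \<in> B \<and> a + b = x}"

definition energy :: "'a::ab_group_add set \<Rightarrow> 'a set \<Rightarrow> nat" where
  "energy A B = card {(a1, a2, b1, b2). a1 \<in> A \<and> a2 \<in> A \<and> b1 \<in> B \<and> b2 \<in> B \<and> a1 + b1 = a2 + b2}"

definition sumset :: "'a::ab_group_add set \<Rightarrow> 'a set \<Rightarrow> 'a set" where
  "sumset A B = {a + b | a b. a \<in> A \<and> b \<in> B}"

end

theory Submission
  imports Defs "HOL-Library.Disjoint_Sets"
begin

text \<open>
  Let \<open>r b = energy_at A B b = \<Sum>b'\<in>B. |(A + b') \<inter> (A + b)|\<close>; these sum to \<open>E(A,B)\<close>,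
  so by Markov few \<open>b\<close> have \<open>r b > K\<close>. Given sets \<open>X b \<subseteq> A + b\<close>, choose disjoint
  pieces \<open>Y j \<subseteq> X (b j)\<close> of size at least \<open>t\<close> greedily among the \<open>b\<close> with \<open>r b \<le> K\<close>.
  When the greedy stops, each such \<open>X b\<close> has fewer than \<open>t\<close> points outside the pieces,
  and the piece \<open>Y j\<close> meets \<open>A + b\<close> in at most \<open>|(A + b) \<inter> (A + b j)|\<close> points; summing
  over \<open>b\<close>, each piece is charged at most \<open>r (b j) \<le> K\<close>. So \<open>s K\<close> bounds the mass
  \<open>\<sigma> = \<Sum>b\<in>B. |X b|\<close> minus the losses. Both claims follow with \<open>K = 4|A|E/\<sigma>\<close>: take
  \<open>X b = A + b\<close>, \<open>t = |A|/2\<close>, resp. \<open>X b = S \<inter> (A + b)\<close>, \<open>t = \<sigma>/(8|B|)\<close> and use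
  \<open>\<sigma> \<le> |A||B|\<close>.
\<close>

lemma greedy_disjoint_pieces:
  fixes X :: "'b \<Rightarrow> 'a set" and t :: real
  assumes "finite C" and "t > 0" and "\<And>b. b \<in> C \<Longrightarrow> finite (X b)"
  shows "\<exists>(s::nat) Y bs. (\<forall>j<s. bs j \<in> C \<and> Y j \<subseteq> X (bs j) \<and> t \<le> real (card (Y j)))
           \<and> disjoint_family_on Y {..<s}
           \<and> (\<forall>b\<in>C. real (card (X b - (\<Union>j<s. Y j))) < t)"
  using assms(1,3)
proof (induction C rule: finite_induct)
  case empty
  show ?case by (intro exI[of _ 0]) (auto simp: disjoint_family_on_def)
next
  case (insert c C)
  then obtain s Y bs where
    pieces: "\<forall>j<(s::nat). bs j \<in> C \<and> Y j \<subseteq> X (bs j) \<and> t \<le> real (card (Y j))"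
    and disj: "disjoint_family_on Y {..<s}"
    and rest: "\<forall>b\<in>C. real (card (X b - (\<Union>j<s. Y j))) < t"
    using insert by auto
  define U where "U = (\<Union>j<s. Y j)"
  show ?case
  proof (cases "real (card (X c - U)) < t")
    case True
    then show ?thesis
      using pieces disj rest by (intro exI[of _ s] exI[of _ Y] exI[of _ bs]) (auto simp: U_def)
  next
    case False
    define Y' where "Y' = Y(s := X c - U)"
    have union: "(\<Union>j<Suc s. Y' j) = U \<union> X c"
      by (auto simp: Y'_def U_def lessThan_Suc)
    have "real (card (X b - (\<Union>j<Suc s. Y' j))) < t" if "b \<in> insert c C" for b
    proof (cases "b = c")
      case True
      then show ?thesis using \<open>t > 0\<close> by (simp add: union Diff_Un)
    next
      case False
      then have "card (X b - (U \<union> X c)) \<le> card (X b - U)"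
        using that insert.prems by (intro card_mono) auto
      then show ?thesis using rest that False by (auto simp: union U_def)
    qed
    moreover have "disjoint_family_on Y' {..<Suc s}"
      using disj by (auto simp: disjoint_family_on_def Y'_def U_def lessThan_Suc)
    moreover have "\<forall>j<Suc s. (bs(s := c)) j \<in> insert c C \<and> Y' j \<subseteq> X ((bs(s := c)) j)
        \<and> t \<le> real (card (Y' j))"
      using pieces False by (auto simp: Y'_def less_Suc_eq)
    ultimately show ?thesis by blast
  qed
qed

definition energy_at :: "'a::ab_group_add set \<Rightarrow> 'a set \<Rightarrow> 'a \<Rightarrow> nat" where
  "energy_at A B b = (\<Sum>b'\<in>B. card ((\<lambda>a. a + b') ` A \<inter> (\<lambda>a. a + b) ` A))"

lemma card_translate:
  fixes A :: "'a::ab_group_add set"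
  shows "card ((\<lambda>a. a + b) ` A) = card A"
  by (rule card_image) (simp add: inj_on_def)

lemma card_Int_translates:
  fixes A :: "'a::ab_group_add set"
  shows "card {(a1, a2). a1 \<in> A \<and> a2 \<in> A \<and> a1 + b1 = a2 + b2}
       = card ((\<lambda>a. a + b1) ` A \<inter> (\<lambda>a. a + b2) ` A)"
proof -
  have "{(a1, a2). a1 \<in> A \<and> a2 \<in> A \<and> a1 + b1 = a2 + b2}
      = (\<lambda>x. (x - b1, x - b2)) ` ((\<lambda>a. a + b1) ` A \<inter> (\<lambda>a. a + b2) ` A)"
  proof (intro equalityI subsetI)
    fix p assume "p \<in> {(a1, a2). a1 \<in> A \<and> a2 \<in> A \<and> a1 + b1 = a2 + b2}"
    then obtain a1 a2 where p: "p = (a1, a2)" "a1 \<in> A" "a2 \<in> A" and eq: "a1 + b1 = a2 + b2"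
      by blast
    have "p = (\<lambda>x. (x - b1, x - b2)) (a1 + b1)"
      using p(1) eq by (metis add_diff_cancel)
    moreover have "a1 + b1 \<in> (\<lambda>a. a + b1) ` A \<inter> (\<lambda>a. a + b2) ` A"
      using p(2,3) eq by (metis IntI image_eqI)
    ultimately show "p \<in> (\<lambda>x. (x - b1, x - b2)) ` ((\<lambda>a. a + b1) ` A \<inter> (\<lambda>a. a + b2) ` A)"
      by blast
  next
    fix p assume "p \<in> (\<lambda>x. (x - b1, x - b2)) ` ((\<lambda>a. a + b1) ` A \<inter> (\<lambda>a. a + b2) ` A)"
    then obtain x a1 a2 where "p = (x - b1, x - b2)" "a1 \<in> A" "a2 \<in> A" "x = a1 + b1" "x = a2 + b2"
      by blast
    moreover from this have "p = (a1, a2)" by (metis add_diff_cancel)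
    ultimately show "p \<in> {(a1, a2). a1 \<in> A \<and> a2 \<in> A \<and> a1 + b1 = a2 + b2}" by simp
  qed
  moreover have "inj (\<lambda>x. (x - b1, x - b2))"
    by (simp add: inj_def)
  ultimately show ?thesis
    by (simp add: card_image inj_on_subset)
qed

lemma energy_eq_sum_energy_at:
  fixes A B :: "'a::ab_group_add set"
  assumes "finite A" "finite B"
  shows "energy A B = (\<Sum>b\<in>B. energy_at A B b)"
proof -
  define P where "P b1 b2 = {(a1, a2). a1 \<in> A \<and> a2 \<in> A \<and> a1 + b1 = a2 + b2}" for b1 b2
  define Q where "Q = (SIGMA bb:B \<times> B. P (fst bb) (snd bb))"
  define f where "f = (\<lambda>(bb::'a \<times> 'a, aa::'a \<times> 'a). (fst aa, snd aa, fst bb, snd bb))"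
  have "{(a1, a2, b1, b2). a1 \<in> A \<and> a2 \<in> A \<and> b1 \<in> B \<and> b2 \<in> B \<and> a1 + b1 = a2 + b2} = f ` Q"
    by (auto simp: f_def P_def Q_def image_iff)
  moreover have "inj_on f Q"
    by (auto simp: f_def inj_on_def)
  moreover have "finite (P b1 b2)" for b1 b2
    using assms by (auto intro: finite_subset[of _ "A \<times> A"] simp: P_def)
  ultimately have "energy A B = (\<Sum>bb\<in>B \<times> B. card (P (fst bb) (snd bb)))"
    using assms by (simp add: energy_def card_image Q_def card_SigmaI)
  also have "\<dots> = (\<Sum>b1\<in>B. \<Sum>b2\<in>B. card (P b1 b2))"
    by (simp add: sum.cartesian_product split_beta)
  also have "\<dots> = (\<Sum>b2\<in>B. \<Sum>b1\<in>B. card (P b1 b2))"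
    by (rule sum.swap)
  finally show ?thesis
    by (simp add: energy_at_def P_def card_Int_translates)
qed

lemma card_le_energy_at:
  fixes A B :: "'a::ab_group_add set"
  assumes "finite B" "b \<in> B"
  shows "card A \<le> energy_at A B b"
  using member_le_sum[OF assms(2), of "\<lambda>b'. card ((\<lambda>a. a + b') ` A \<inter> (\<lambda>a. a + b) ` A)"] assms
  by (simp add: energy_at_def card_translate)

lemma energy_pos:
  fixes A B :: "'a::ab_group_add set"
  assumes "finite A" "finite B" "A \<noteq> {}" "B \<noteq> {}"
  shows "energy A B > 0"
proof -
  obtain b where "b \<in> B" using assms(4) by blast
  then have "card A \<le> energy A B"
    using card_le_energy_at[OF assms(2)] member_le_sum[of b B "energy_at A B"] assms
    by (simp add: energy_eq_sum_energy_at) (meson order_trans)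
  then show ?thesis using assms(1,3) by (metis card_gt_0_iff less_le_trans)
qed

lemma conv_eq_card:
  fixes A B :: "'a::ab_group_add set"
  shows "conv A B x = card {b\<in>B. x \<in> (\<lambda>a. a + b) ` A}"
proof -
  have inj: "inj_on snd {(a, b). a \<in> A \<and> b \<in> B \<and> a + b = x}"
    by (auto simp: inj_on_def)
  have "snd ` {(a, b). a \<in> A \<and> b \<in> B \<and> a + b = x} = {b\<in>B. x \<in> (\<lambda>a. a + b) ` A}"
    by (auto simp: image_iff)
  then show ?thesis
    unfolding conv_def using card_image[OF inj] by simp
qed

lemma sum_conv_eq_sum_card_Int:
  fixes A B S :: "'a::ab_group_add set"
  assumes "finite S" "finite B"
  shows "(\<Sum>x\<in>S. conv A B x) = (\<Sum>b\<in>B. card (S \<inter> (\<lambda>a. a + b) ` A))"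
proof -
  have "(\<Sum>x\<in>S. conv A B x) = (\<Sum>x\<in>S. \<Sum>b\<in>B. if x \<in> (\<lambda>a. a + b) ` A then 1 else 0)"
    using assms by (simp add: conv_eq_card sum.If_cases Int_def)
  also have "\<dots> = (\<Sum>b\<in>B. \<Sum>x\<in>S. if x \<in> (\<lambda>a. a + b) ` A then 1 else 0)"
    by (rule sum.swap)
  also have "\<dots> = (\<Sum>b\<in>B. card (S \<inter> (\<lambda>a. a + b) ` A))"
    using assms by (simp add: sum.If_cases)
  finally show ?thesis .
qed

lemma finite_sumset:
  fixes A B :: "'a::ab_group_add set"
  assumes "finite A" "finite B"
  shows "finite (sumset A B)"
proof -
  have "sumset A B = (\<lambda>p. fst p + snd p) ` (A \<times> B)"
    unfolding sumset_def by force
  then show ?thesis using assms by simp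
qed

lemma card_gt_mult_le_sum:
  fixes g :: "'b \<Rightarrow> real"
  assumes "finite B" "\<And>b. b \<in> B \<Longrightarrow> 0 \<le> g b"
  shows "real (card {b\<in>B. K < g b}) * K \<le> (\<Sum>b\<in>B. g b)"
proof -
  have "real (card {b\<in>B. K < g b}) * K = (\<Sum>b\<in>{b\<in>B. K < g b}. K)" by simp
  also have "\<dots> \<le> (\<Sum>b\<in>{b\<in>B. K < g b}. g b)" by (rule sum_mono) auto
  also have "\<dots> \<le> (\<Sum>b\<in>B. g b)" using assms by (intro sum_mono2) auto
  finally show ?thesis .
qed

lemma disjoint_pieces_low_energy:
  fixes A B C :: "'a::ab_group_add set" and X :: "'a \<Rightarrow> 'a set" and t K :: real
  assumes "finite A" "finite B" "C \<subseteq> B" "t > 0"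
    and translate: "\<And>b. b \<in> C \<Longrightarrow> X b \<subseteq> (\<lambda>a. a + b) ` A"
    and low: "\<And>b. b \<in> C \<Longrightarrow> real (energy_at A B b) \<le> K"
  shows "\<exists>(s::nat) Y bs. (\<forall>j<s. bs j \<in> C \<and> Y j \<subseteq> X (bs j) \<and> t \<le> real (card (Y j)))
           \<and> disjoint_family_on Y {..<s}
           \<and> (\<Sum>b\<in>C. real (card (X b)) - t) \<le> real s * K"
proof -
  have finC: "finite C" using assms(2,3) by (rule finite_subset[rotated])
  have finX: "finite (X b)" if "b \<in> C" for b
    using translate[OF that] assms(1) by (meson finite_imageI finite_subset)
  obtain s Y bs where
    pieces: "\<forall>j<(s::nat). bs j \<in> C \<and> Y j \<subseteq> X (bs j) \<and> t \<le> real (card (Y j))"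
    and disj: "disjoint_family_on Y {..<s}"
    and rest: "\<forall>b\<in>C. real (card (X b - (\<Union>j<s. Y j))) < t"
    using greedy_disjoint_pieces[of C t X, OF finC \<open>t > 0\<close> finX] by auto
  define U where "U = (\<Union>j<s. Y j)"
  have covered: "real (card (X b)) - t
      \<le> (\<Sum>j<s. real (card ((\<lambda>a. a + b) ` A \<inter> (\<lambda>a. a + bs j) ` A)))" if "b \<in> C" for b
  proof -
    have "X b \<inter> U \<subseteq> (\<Union>j<s. (\<lambda>a. a + b) ` A \<inter> (\<lambda>a. a + bs j) ` A)"
      using translate[OF that] translate pieces by (fastforce simp: U_def)
    then have "card (X b \<inter> U) \<le> card (\<Union>j<s. (\<lambda>a. a + b) ` A \<inter> (\<lambda>a. a + bs j) ` A)"
      using assms(1) by (intro card_mono) auto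
    also have "\<dots> \<le> (\<Sum>j<s. card ((\<lambda>a. a + b) ` A \<inter> (\<lambda>a. a + bs j) ` A))"
      by (rule card_UN_le) simp
    finally have "real (card (X b \<inter> U)) \<le> (\<Sum>j<s. real (card ((\<lambda>a. a + b) ` A \<inter> (\<lambda>a. a + bs j) ` A)))"
      by (simp flip: of_nat_sum)
    moreover have "card (X b) = card (X b \<inter> U) + card (X b - U)"
      using card_Int_Diff[OF finX[OF that]] .
    ultimately show ?thesis
      using rest that by (auto simp: U_def)
  qed
  have "(\<Sum>b\<in>C. real (card (X b)) - t)
      \<le> (\<Sum>b\<in>C. \<Sum>j<s. real (card ((\<lambda>a. a + b) ` A \<inter> (\<lambda>a. a + bs j) ` A)))"
    by (rule sum_mono) (rule covered)
  also have "\<dots> = (\<Sum>j<s. \<Sum>b\<in>C. real (card ((\<lambda>a. a + b) ` A \<inter> (\<lambda>a. a + bs j) ` A)))"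
    by (rule sum.swap)
  also have "\<dots> \<le> (\<Sum>j<s. real (energy_at A B (bs j)))"
    unfolding energy_at_def of_nat_sum
    by (intro sum_mono sum_mono2) (use assms(2,3) in auto)
  also have "\<dots> \<le> (\<Sum>j<s. K)"
    using pieces low by (intro sum_mono) auto
  finally show ?thesis
    using pieces disj by auto
qed

lemma disjoint_pieces_in_translates:
  fixes A B :: "'a::ab_group_add set" and X :: "'a \<Rightarrow> 'a set" and t K :: real
  assumes "finite A" "finite B" "t > 0" "K > 0"
    and translate: "\<And>b. b \<in> B \<Longrightarrow> X b \<subseteq> (\<lambda>a. a + b) ` A"
  shows "\<exists>(s::nat) Y bs. (\<forall>j<s. bs j \<in> B \<and> Y j \<subseteq> X (bs j) \<and> t \<le> real (card (Y j)))
           \<and> disjoint_family_on Y {..<s}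
           \<and> (\<Sum>b\<in>B. real (card (X b))) - real (card A) * real (energy A B) / K
               - real (card B) * t \<le> real s * K"
proof -
  define C where "C = {b\<in>B. real (energy_at A B b) \<le> K}"
  define H where "H = {b\<in>B. K < real (energy_at A B b)}"
  have partition: "B = C \<union> H" "C \<inter> H = {}" "finite C" "finite H"
    using assms(2) by (auto simp: C_def H_def)
  have "real (card H) * K \<le> real (energy A B)"
    using card_gt_mult_le_sum[of B "\<lambda>b. real (energy_at A B b)" K] assms(1,2)
    by (simp add: H_def energy_eq_sum_energy_at)
  then have "real (card A) * (real (card H) * K) \<le> real (card A) * real (energy A B)"
    by (simp add: mult_left_mono)
  then have card_H: "real (card H) * real (card A) \<le> real (card A) * real (energy A B) / K"
    using \<open>K > 0\<close> by (simp add: field_simps mult_ac)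
  have "card (X b) \<le> card A" if "b \<in> B" for b
    using card_mono[OF _ translate[OF that]] assms(1) by (simp add: card_translate)
  then have sum_H: "(\<Sum>b\<in>H. real (card (X b))) \<le> real (card H) * real (card A)"
    using sum_mono[of H "\<lambda>b. real (card (X b))" "\<lambda>_. real (card A)"] by (simp add: H_def)
  have sum_B: "(\<Sum>b\<in>B. real (card (X b))) = (\<Sum>b\<in>C. real (card (X b))) + (\<Sum>b\<in>H. real (card (X b)))"
    using partition by (simp add: sum.union_disjoint)
  have card_C: "real (card C) * t \<le> real (card B) * t"
    using assms(2,3) partition by (simp add: card_mono)
  have "\<exists>(s::nat) Y bs. (\<forall>j<s. bs j \<in> C \<and> Y j \<subseteq> X (bs j) \<and> t \<le> real (card (Y j)))
      \<and> disjoint_family_on Y {..<s} \<and> (\<Sum>b\<in>C. real (card (X b)) - t) \<le> real s * K"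
    by (rule disjoint_pieces_low_energy[of A B C]) (use assms in \<open>auto simp: C_def\<close>)
  then obtain s Y bs where
    pieces: "\<forall>j<(s::nat). bs j \<in> C \<and> Y j \<subseteq> X (bs j) \<and> t \<le> real (card (Y j))"
    and disj: "disjoint_family_on Y {..<s}"
    and bound: "(\<Sum>b\<in>C. real (card (X b)) - t) \<le> real s * K"
    by auto
  have "(\<Sum>b\<in>C. real (card (X b)) - t) = (\<Sum>b\<in>C. real (card (X b))) - real (card C) * t"
    by (simp add: sum_subtractf)
  then have "(\<Sum>b\<in>B. real (card (X b))) - real (card A) * real (energy A B) / K
      - real (card B) * t \<le> real s * K"
    using bound card_H sum_H sum_B card_C by linarith
  moreover have "\<forall>j<s. bs j \<in> B \<and> Y j \<subseteq> X (bs j) \<and> t \<le> real (card (Y j))"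
    using pieces partition by auto
  ultimately show ?thesis
    using disj by blast
qed

lemma many_disjoint_halves_of_translates:
  fixes A B :: "'a::ab_group_add set"
  assumes "finite A" "finite B" "A \<noteq> {}" "B \<noteq> {}"
  shows "\<exists>(s::nat) Aj b. real s \<ge> (1/16) * real (card A) * real (card B) ^ 2 / real (energy A B)
           \<and> (\<forall>j<s. b j \<in> B \<and> Aj j \<subseteq> (\<lambda>a. a + b j) ` A \<and> real (card (Aj j)) \<ge> real (card A) / 2)
           \<and> disjoint_family_on Aj {..<s}"
proof -
  define E where "E = real (energy A B)"
  define K where "K = 4 * E / real (card B)"
  have pos: "E > 0" "real (card A) > 0" "real (card B) > 0"
    using energy_pos[OF assms] assms by (simp_all add: E_def card_gt_0_iff)
  then obtain s Y bs where
    pieces: "\<forall>j<(s::nat). bs j \<in> B \<and> Y j \<subseteq> (\<lambda>a. a + bs j) ` A \<and> real (card A) / 2 \<le> real (card (Y j))"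
    and disj: "disjoint_family_on Y {..<s}"
    and bound: "(\<Sum>b\<in>B. real (card ((\<lambda>a. a + b) ` A))) - real (card A) * E / K
        - real (card B) * (real (card A) / 2) \<le> real s * K"
    using disjoint_pieces_in_translates[of A B "real (card A) / 2" K "\<lambda>b. (\<lambda>a. a + b) ` A"] assms
    by (auto simp: K_def E_def)
  have "(\<Sum>b\<in>B. real (card ((\<lambda>a. a + b) ` A))) = real (card B) * real (card A)"
    by (simp add: card_translate)
  then have "real (card A) * real (card B) / 4 \<le> real s * (4 * E / real (card B))"
    using bound pos by (simp add: K_def field_simps)
  then have "(1/16) * real (card A) * real (card B) ^ 2 / E \<le> real s"
    using pos by (simp add: field_simps power2_eq_square)
  then show ?thesis
    using pieces disj unfolding E_def by blast
qed

lemma many_disjoint_pieces_of_popular_sums: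
  fixes A B S :: "'a::ab_group_add set"
  assumes "finite A" "finite B" "A \<noteq> {}" "B \<noteq> {}" "S \<subseteq> sumset A B"
    and popular: "real (\<Sum>x\<in>S. conv A B x) \<ge> 16 * real (card B)"
  shows "\<exists>(s::nat) Sj b. real s \<ge> (1/256) * real (\<Sum>x\<in>S. conv A B x) ^ 3
                          / (real (card A) ^ 2 * real (card B) * real (energy A B))
           \<and> (\<forall>j<s. b j \<in> B \<and> Sj j \<subseteq> S \<inter> (\<lambda>a. a + b j) ` A
                  \<and> real (card (Sj j)) \<ge> (1/8) * real (\<Sum>x\<in>S. conv A B x) / real (card B))
           \<and> disjoint_family_on Sj {..<s}"
proof -
  define E where "E = real (energy A B)"
  define \<sigma> where "\<sigma> = real (\<Sum>x\<in>S. conv A B x)"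
  define K where "K = 4 * real (card A) * E / \<sigma>"
  have "finite S"
    using assms(1,2,5) finite_sumset finite_subset by blast
  then have \<sigma>_eq: "\<sigma> = (\<Sum>b\<in>B. real (card (S \<inter> (\<lambda>a. a + b) ` A)))"
    using assms(2) by (simp add: \<sigma>_def sum_conv_eq_sum_card_Int)
  have "real (card (S \<inter> (\<lambda>a. a + b) ` A)) \<le> real (card A)" for b
    using card_mono[of "(\<lambda>a. a + b) ` A" "S \<inter> (\<lambda>a. a + b) ` A"] assms(1)
    by (simp add: card_translate)
  then have \<sigma>_le: "\<sigma> \<le> real (card A) * real (card B)"
    using sum_mono[of B "\<lambda>b. real (card (S \<inter> (\<lambda>a. a + b) ` A))" "\<lambda>_. real (card A)"]
    by (simp add: \<sigma>_eq mult.commute)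
  have pos: "E > 0" "real (card A) > 0" "real (card B) > 0"
    using energy_pos[OF assms(1-4)] assms(1-4) by (simp_all add: E_def card_gt_0_iff)
  then have "\<sigma> > 0"
    using popular by (simp add: \<sigma>_def)
  have t_pos: "\<sigma> / (8 * real (card B)) > 0" and K_pos: "K > 0"
    using pos \<open>\<sigma> > 0\<close> by (simp_all add: K_def)
  obtain s Y bs where
    pieces: "\<forall>j<(s::nat). bs j \<in> B \<and> Y j \<subseteq> S \<inter> (\<lambda>a. a + bs j) ` A
      \<and> \<sigma> / (8 * real (card B)) \<le> real (card (Y j))"
    and disj: "disjoint_family_on Y {..<s}"
    and bound: "(\<Sum>b\<in>B. real (card (S \<inter> (\<lambda>a. a + b) ` A))) - real (card A) * E / K
        - real (card B) * (\<sigma> / (8 * real (card B))) \<le> real s * K"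
    using disjoint_pieces_in_translates[OF assms(1,2) t_pos K_pos, where X = "\<lambda>b. S \<inter> (\<lambda>a. a + b) ` A"]
    unfolding E_def by blast
  have "5 * \<sigma> / 8 \<le> real s * (4 * real (card A) * E / \<sigma>)"
    using bound[folded \<sigma>_eq] pos \<open>\<sigma> > 0\<close> by (simp add: K_def field_simps)
  then have "5 * \<sigma> ^ 2 \<le> 32 * (real s * real (card A) * E)"
    using \<open>\<sigma> > 0\<close> by (simp add: field_simps power2_eq_square)
  moreover have "0 \<le> real s * real (card A) * E"
    using pos by simp
  ultimately have "\<sigma> ^ 2 \<le> 256 * (real s * real (card A) * E)"
    by linarith
  then have "\<sigma> ^ 2 * (real (card A) * real (card B))
      \<le> 256 * (real s * real (card A) * E) * (real (card A) * real (card B))"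
    by (rule mult_right_mono) simp
  moreover have "\<sigma> ^ 3 \<le> \<sigma> ^ 2 * (real (card A) * real (card B))"
    using mult_left_mono[OF \<sigma>_le, of "\<sigma> * \<sigma>"] by (simp add: power3_eq_cube power2_eq_square)
  ultimately have "\<sigma> ^ 3 \<le> 256 * real s * (real (card A) ^ 2 * real (card B) * E)"
    by (simp add: power2_eq_square mult_ac)
  then have "(1/256) * \<sigma> ^ 3 / (real (card A) ^ 2 * real (card B) * E) \<le> real s"
    using pos by (simp add: field_simps)
  moreover have "(1/8) * \<sigma> / real (card B) = \<sigma> / (8 * real (card B))"
    by simp
  ultimately show ?thesis
    using pieces disj unfolding E_def \<sigma>_def by auto
qed

theorem lemma9:
  fixes A B :: "'a::ab_group_add set"
  assumes "finite A" "finite B" "A \<noteq> {}" "B \<noteq> {}"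
  shows "(\<exists>s::nat. \<exists>Aj :: nat \<Rightarrow> 'a set. \<exists>b :: nat \<Rightarrow> 'a.
            real s \<ge> (1/16) * real (card A) * real (card B) ^ 2 / real (energy A B)
          \<and> (\<forall>j<s. b j \<in> B \<and> Aj j \<subseteq> (\<lambda>a. a + b j) ` A \<and> real (card (Aj j)) \<ge> real (card A) / 2)
          \<and> (\<forall>i<s. \<forall>j<s. i \<noteq> j \<longrightarrow> Aj i \<inter> Aj j = {}))
       \<and> (\<forall>S. S \<subseteq> sumset A B \<longrightarrow>
            real (\<Sum>x\<in>S. conv A B x) \<ge> 16 * real (card B) \<longrightarrow>
            (\<exists>s::nat. \<exists>Sj :: nat \<Rightarrow> 'a set. \<exists>b :: nat \<Rightarrow> 'a.
              real s \<ge> (1/256) * real (\<Sum>x\<in>S. conv A B x) ^ 3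
                        / (real (card A) ^ 2 * real (card B) * real (energy A B))
            \<and> (\<forall>j<s. b j \<in> B \<and> Sj j \<subseteq> S \<inter> (\<lambda>a. a + b j) ` A
                   \<and> real (card (Sj j)) \<ge> (1/8) * real (\<Sum>x\<in>S. conv A B x) / real (card B))
            \<and> (\<forall>i<s. \<forall>j<s. i \<noteq> j \<longrightarrow> Sj i \<inter> Sj j = {})))"
  using many_disjoint_halves_of_translates[OF assms]
    many_disjoint_pieces_of_popular_sums[OF assms]
  unfolding disjoint_family_on_def Ball_def lessThan_iff by blast

end
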